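(* Let $(Y_t,X_t)_{t\ge1}$ be a hidden Markov model with finite state space $S$, $T\ge1$, and $x^T\in\mathcal X^T$ with $p(x^T)>0$. For each $k\in\{1,\dots,T\}$ let $v(x^T;k)$ be any minimizer over $s^T\in S^T$ of $\bar R_k(s^T|x^T)$. Then: (i) for every $k\in\{1,\dots,T\}$ and every $s^T\in S^T$, $\bar R_k(s^T|x^T)=(k-1)\bar R_\infty(s^T|x^T)+\bar R_1(s^T|x^T)$; (ii) for every $k\in\{2,\dots,T\}$, $v(x^T;k)$ is admissible, i.e. $p(v(x^T;k)|x^T)>0$; (iii) for every $k\in\{2,\dots,T\}$, $\bar R_\infty(v(x^T;k)|x^T)\le\bar R_\infty(v(x^T;k-1)|x^T)$; (iv) for every $k\in\{2,\dots,T\}$, $\bar R_1(v(x^T;k)|x^T)\ge\bar R_1(v(x^T;k-1)|x^T)$.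
   Context: Hidden Markov model: $Y$ is a Markov chain on finite $S$; given $Y$, the $X_t$ are conditionally independent and $X_t$ has density $f_s$ when $Y_t=s$. Posterior path law $p(s^T|x^T)=\mathbf P(Y^T=s^T|X^T=x^T)$; for $1\le a\le b\le T$, $p(s_a^b|x^T)=\mathbf P(Y_a^b=s_a^b|X^T=x^T)$ with $s_a^b=(s_a,\dots,s_b)$. For a positive integer $k$: $\bar R_k(s^T|x^T)=-\frac1T\ln\prod_{j=1-k}^{T-1}p(s_{(j+1)\vee1}^{(j+k)\wedge T}|x^T)$ (so $\bar R_1(s^T|x^T)=-\frac1T\sum_{t=1}^T\ln\mathbf P(Y_t=s_t|X^T=x^T)$), and $\bar R_\infty(s^T|x^T)=-\frac1T\ln p(s^T|x^T)$. Here $\vee=\max$, $\wedge=\min$, $\ln0=-\infty$. *)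

theory Defs
  imports "HOL-Analysis.Analysis"
begin

definition paths :: "nat \<Rightarrow> (nat \<Rightarrow> 's) set" where
  "paths T = {1..T} \<rightarrow>\<^sub>E (UNIV :: 's set)"

definition hmm_joint ::
  "('s \<Rightarrow> real) \<Rightarrow> ('s \<Rightarrow> 's \<Rightarrow> real) \<Rightarrow> ('s \<Rightarrow> 'x \<Rightarrow> real) \<Rightarrow> nat
    \<Rightarrow> (nat \<Rightarrow> 'x) \<Rightarrow> (nat \<Rightarrow> 's) \<Rightarrow> real" where
  "hmm_joint p0 P f T x s =
     p0 (s 1) * (\<Prod>t\<in>{1..<T}. P (s t) (s (Suc t))) * (\<Prod>t\<in>{1..T}. f (s t) (x t))"

definition hmm_px ::
  "('s::finite \<Rightarrow> real) \<Rightarrow> ('s \<Rightarrow> 's \<Rightarrow> real) \<Rightarrow> ('s \<Rightarrow> 'x \<Rightarrow> real) \<Rightarrow> nat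
    \<Rightarrow> (nat \<Rightarrow> 'x) \<Rightarrow> real" where
  "hmm_px p0 P f T x = (\<Sum>s\<in>paths T. hmm_joint p0 P f T x s)"

definition hmm_post ::
  "('s::finite \<Rightarrow> real) \<Rightarrow> ('s \<Rightarrow> 's \<Rightarrow> real) \<Rightarrow> ('s \<Rightarrow> 'x \<Rightarrow> real) \<Rightarrow> nat
    \<Rightarrow> (nat \<Rightarrow> 'x) \<Rightarrow> nat \<Rightarrow> nat \<Rightarrow> (nat \<Rightarrow> 's) \<Rightarrow> real" where
  "hmm_post p0 P f T x a b s =
     (\<Sum>s'\<in>paths T. if (\<forall>t\<in>{a..b}. s' t = s t) then hmm_joint p0 P f T x s' else 0)
       / hmm_px p0 P f T x"

definition eln :: "real \<Rightarrow> ereal" where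
  "eln y = (if y > 0 then ereal (ln y) else -\<infinity>)"

definition Rbar ::
  "('s::finite \<Rightarrow> real) \<Rightarrow> ('s \<Rightarrow> 's \<Rightarrow> real) \<Rightarrow> ('s \<Rightarrow> 'x \<Rightarrow> real) \<Rightarrow> nat
    \<Rightarrow> (nat \<Rightarrow> 'x) \<Rightarrow> nat \<Rightarrow> (nat \<Rightarrow> 's) \<Rightarrow> ereal" where
  "Rbar p0 P f T x k s =
     ereal (1 / real T) * - eln (\<Prod>j\<in>{1 - int k .. int T - 1}.
        hmm_post p0 P f T x (nat (max (j + 1) 1)) (nat (min (j + int k) (int T))) s)"

definition Rbar_inf ::
  "('s::finite \<Rightarrow> real) \<Rightarrow> ('s \<Rightarrow> 's \<Rightarrow> real) \<Rightarrow> ('s \<Rightarrow> 'x \<Rightarrow> real) \<Rightarrow> nat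
    \<Rightarrow> (nat \<Rightarrow> 'x) \<Rightarrow> (nat \<Rightarrow> 's) \<Rightarrow> ereal" where
  "Rbar_inf p0 P f T x s = ereal (1 / real T) * - eln (hmm_post p0 P f T x 1 T s)"

end

theory Submission
  imports Defs
begin

text \<open>Given the observations, the hidden chain is still a Markov chain, so the posterior
  probability of a block of states is the product of its one-point marginals and of the
  dependence ratios $p(s_t, s_{t+1}) / (p(s_t)\,p(s_{t+1}))$ along it. In the product defining
  $\bar R_k$ every time $t$ lies in exactly $k$ of the clipped windows and every edge $(t, t+1)$
  in exactly $k - 1$, so that product equals $p(s^T)^{k-1} \prod_t p(s_t)$, which is (i).
  Thus $\bar R_k = (k-1) \bar R_\infty + \bar R_1$ with both terms in $[0, \infty]$; a minimiser
  for $k \ge 2$ has finite $\bar R_\infty$, i.e. is admissible, and comparing the minimality of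
  $v(k)$ for weight $k - 1$ with that of $v(k-1)$ for weight $k - 2$ gives (iii) and (iv).\<close>

lemma uminus_eln_nonneg: "y \<le> 1 \<Longrightarrow> 0 \<le> - eln y"
  by (simp add: eln_def)

lemma uminus_eln_power_mult:
  assumes "a \<ge> 0" "b \<ge> 0"
  shows "- eln (a ^ n * b) = ereal (real n) * - eln a + - eln b"
proof (cases "a > 0 \<and> b > 0")
  case True
  then show ?thesis by (simp add: eln_def ln_mult ln_realpow algebra_simps)
next
  case False
  then have "a = 0 \<or> b = 0" using assms by auto
  then show ?thesis
    using assms by (cases n) (auto simp: eln_def)
qed

lemma ereal_weighted_tradeoff:
  fixes a b c d :: real and a' b' :: ereal
  assumes "0 \<le> d" "d < c" "0 \<le> a'" "0 \<le> b'"
    and le_c: "ereal c * ereal a + ereal b \<le> ereal c * a' + b'"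
    and le_d: "ereal d * a' + b' \<le> ereal d * ereal a + ereal b"
  shows "ereal a \<le> a' \<and> b' \<le> ereal b"
proof (cases a')
  case (real A')
  have "b' \<noteq> \<infinity>" using le_d real by auto
  then obtain B' where B': "b' = ereal B'" using \<open>0 \<le> b'\<close> by (cases b') auto
  have "c * a + b \<le> c * A' + B'" "d * A' + B' \<le> d * a + b"
    using le_c le_d real B' by simp_all
  then have "(c - d) * a \<le> (c - d) * A'" by (simp add: algebra_simps)
  then have "a \<le> A'" using \<open>d < c\<close> by simp
  moreover have "d * (a - A') \<le> 0" using \<open>a \<le> A'\<close> \<open>0 \<le> d\<close> by (simp add: mult_nonneg_nonpos)
  ultimately show ?thesis using \<open>d * A' + B' \<le> d * a + b\<close> real B' by (simp add: algebra_simps)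
next
  case PInf
  then show ?thesis using le_d \<open>0 \<le> d\<close> by (cases "d = 0") auto
qed (use \<open>0 \<le> a'\<close> in simp)

lemma sum_agreeing_paths_split:
  fixes g h :: "(nat \<Rightarrow> 's::finite) \<Rightarrow> 'a::comm_semiring_1" and s :: "nat \<Rightarrow> 's"
  assumes "1 \<le> a" "a \<le> b" "b \<le> c" "c \<le> T"
  shows "(\<Sum>s'\<in>{s'\<in>paths T. \<forall>t\<in>{a..c}. s' t = s t}. g (restrict s' {1..b}) * h (restrict s' {b..T}))
       = (\<Sum>p\<in>{p\<in>{1..b} \<rightarrow>\<^sub>E UNIV. \<forall>t\<in>{a..b}. p t = s t}. g p)
         * (\<Sum>q\<in>{q\<in>{b..T} \<rightarrow>\<^sub>E UNIV. \<forall>t\<in>{b..c}. q t = s t}. h q)"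
    (is "sum _ ?S = sum g ?A * sum h ?B")
proof -
  have "sum g ?A * sum h ?B = (\<Sum>(p, q)\<in>?A \<times> ?B. g p * h q)"
    by (simp add: sum_product sum.cartesian_product)
  also have "\<dots> = (\<Sum>s'\<in>?S. g (restrict s' {1..b}) * h (restrict s' {b..T}))"
  proof (rule sum.reindex_bij_witness[where i = "\<lambda>s'. (restrict s' {1..b}, restrict s' {b..T})"
        and j = "\<lambda>(p, q) t. if t \<le> b then p t else q t"])
    fix pq assume "pq \<in> ?A \<times> ?B"
    with assms show "(case pq of (p, q) \<Rightarrow> \<lambda>t. if t \<le> b then p t else q t) \<in> ?S"
      by (cases pq) (auto simp: paths_def PiE_def extensional_def)
  next
    fix pq assume pq: "pq \<in> ?A \<times> ?B"
    obtain p q where [simp]: "pq = (p, q)" by (cases pq)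
    have "restrict (\<lambda>t. if t \<le> b then p t else q t) {1..b} = p"
      "restrict (\<lambda>t. if t \<le> b then p t else q t) {b..T} = q"
      using pq assms by (auto simp: PiE_def extensional_def fun_eq_iff)
    then show "g (restrict (case pq of (p, q) \<Rightarrow> \<lambda>t. if t \<le> b then p t else q t) {1..b})
        * h (restrict (case pq of (p, q) \<Rightarrow> \<lambda>t. if t \<le> b then p t else q t) {b..T})
      = (case pq of (p, q) \<Rightarrow> g p * h q)" by simp
  qed (use assms in \<open>auto simp: paths_def PiE_def extensional_def fun_eq_iff\<close>)
  finally show ?thesis ..
qed

lemma card_windows_covering_point:
  assumes "k \<ge> 1" "t \<in> {1..T}"
  shows "card {j \<in> {1 - int k .. int T - 1}.
      nat (max (j + 1) 1) \<le> t \<and> t \<le> nat (min (j + int k) (int T))} = k"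
proof -
  have "{j \<in> {1 - int k .. int T - 1}. nat (max (j + 1) 1) \<le> t \<and> t \<le> nat (min (j + int k) (int T))}
      = {int t - int k .. int t - 1}" using assms by auto
  then show ?thesis by simp
qed

lemma card_windows_covering_edge:
  assumes "k \<ge> 1" "t \<in> {1..<T}"
  shows "card {j \<in> {1 - int k .. int T - 1}.
      nat (max (j + 1) 1) \<le> t \<and> t < nat (min (j + int k) (int T))} = k - 1"
proof -
  have "{j \<in> {1 - int k .. int T - 1}. nat (max (j + 1) 1) \<le> t \<and> t < nat (min (j + int k) (int T))}
      = {int t + 1 - int k .. int t - 1}" using assms by auto
  then show ?thesis using assms by simp
qed

lemma prod_over_windows:
  fixes g h :: "nat \<Rightarrow> 'a::comm_monoid_mult"
  assumes "k \<ge> 1"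
  shows "(\<Prod>j\<in>{1 - int k .. int T - 1}.
      (\<Prod>t\<in>{nat (max (j + 1) 1) .. nat (min (j + int k) (int T))}. g t)
      * (\<Prod>t\<in>{nat (max (j + 1) 1) ..< nat (min (j + int k) (int T))}. h t))
    = (\<Prod>t\<in>{1..T}. g t ^ k) * (\<Prod>t\<in>{1..<T}. h t ^ (k - 1))"
proof -
  define J where "J = {1 - int k .. int T - 1}"
  define lo where "lo j = nat (max (j + 1) 1)" for j
  define hi where "hi j = nat (min (j + int k) (int T))" for j
  have windows: "{lo j..hi j} = {t\<in>{1..T}. lo j \<le> t \<and> t \<le> hi j}"
      "{lo j..<hi j} = {t\<in>{1..<T}. lo j \<le> t \<and> t < hi j}" if "j \<in> J" for j
    using that assms unfolding J_def lo_def hi_def by auto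
  have "(\<Prod>j\<in>J. (\<Prod>t\<in>{lo j..hi j}. g t) * (\<Prod>t\<in>{lo j..<hi j}. h t))
      = (\<Prod>j\<in>J. \<Prod>t\<in>{t\<in>{1..T}. lo j \<le> t \<and> t \<le> hi j}. g t)
        * (\<Prod>j\<in>J. \<Prod>t\<in>{t\<in>{1..<T}. lo j \<le> t \<and> t < hi j}. h t)"
    unfolding prod.distrib by (intro arg_cong2[where f = "(*)"] prod.cong refl) (simp_all add: windows)
  also have "\<dots> = (\<Prod>t\<in>{1..T}. \<Prod>j\<in>{j\<in>J. lo j \<le> t \<and> t \<le> hi j}. g t)
        * (\<Prod>t\<in>{1..<T}. \<Prod>j\<in>{j\<in>J. lo j \<le> t \<and> t < hi j}. h t)"
  proof -
    have "finite J" by (simp add: J_def)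
    then show ?thesis
      by (simp only: prod.swap_restrict[OF \<open>finite J\<close>, of "{1..T}"]
          prod.swap_restrict[OF \<open>finite J\<close>, of "{1..<T}"] finite_atLeastAtMost finite_atLeastLessThan)
  qed
  also have "\<dots> = (\<Prod>t\<in>{1..T}. g t ^ k) * (\<Prod>t\<in>{1..<T}. h t ^ (k - 1))"
    using card_windows_covering_point[OF assms] card_windows_covering_edge[OF assms]
    by (simp add: J_def lo_def hi_def)
  finally show ?thesis unfolding J_def lo_def hi_def .
qed

locale hmm_posterior =
  fixes p0 :: "'s::finite \<Rightarrow> real" and P :: "'s \<Rightarrow> 's \<Rightarrow> real"
    and f :: "'s \<Rightarrow> 'x \<Rightarrow> real" and T :: nat and x :: "nat \<Rightarrow> 'x"
  assumes p0_nonneg: "\<And>i. p0 i \<ge> 0" and P_nonneg: "\<And>i j. P i j \<ge> 0"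
    and f_nonneg: "\<And>i y. f i y \<ge> 0" and T_pos: "T \<ge> 1"
    and px_pos: "hmm_px p0 P f T x > 0"
begin

abbreviation "joint \<equiv> hmm_joint p0 P f T x"
abbreviation "post \<equiv> hmm_post p0 P f T x"

definition window_mass :: "nat \<Rightarrow> nat \<Rightarrow> (nat \<Rightarrow> 's) \<Rightarrow> real" where
  "window_mass a b s = (\<Sum>s'\<in>{s'\<in>paths T. \<forall>t\<in>{a..b}. s' t = s t}. joint s')"

definition prefix_weight :: "nat \<Rightarrow> (nat \<Rightarrow> 's) \<Rightarrow> real" where
  "prefix_weight b p = p0 (p 1) * (\<Prod>t\<in>{1..<b}. P (p t) (p (Suc t))) * (\<Prod>t\<in>{1..b}. f (p t) (x t))"

definition suffix_weight :: "nat \<Rightarrow> (nat \<Rightarrow> 's) \<Rightarrow> real" where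
  "suffix_weight b q = (\<Prod>t\<in>{b..<T}. P (q t) (q (Suc t))) * (\<Prod>t\<in>{Suc b..T}. f (q t) (x t))"

lemma finite_paths: "finite (paths T :: (nat \<Rightarrow> 's) set)"
  unfolding paths_def by (intro finite_PiE) simp_all

lemma joint_nonneg: "joint s \<ge> 0"
  unfolding hmm_joint_def by (intro mult_nonneg_nonneg prod_nonneg p0_nonneg P_nonneg f_nonneg)

lemma post_eq_window_mass: "post a b s = window_mass a b s / hmm_px p0 P f T x"
  unfolding hmm_post_def window_mass_def by (simp add: sum.inter_filter[OF finite_paths])

text \<open>Both factors share only the state at time $b$; this is the source of the Markov
  property of the posterior.\<close>

lemma joint_split:
  assumes "1 \<le> b" "b \<le> T"
  shows "joint s = prefix_weight b (restrict s {1..b}) * suffix_weight b (restrict s {b..T})"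
proof -
  have "{1..<T} = {1..<b} \<union> {b..<T}" "{1..T} = {1..b} \<union> {Suc b..T}" using assms by auto
  then have "joint s = (p0 (s 1) * (\<Prod>t\<in>{1..<b}. P (s t) (s (Suc t))) * (\<Prod>t\<in>{1..b}. f (s t) (x t)))
      * ((\<Prod>t\<in>{b..<T}. P (s t) (s (Suc t))) * (\<Prod>t\<in>{Suc b..T}. f (s t) (x t)))"
    unfolding hmm_joint_def by (simp add: prod.union_disjoint ivl_disj_int_two mult_ac)
  also have "\<dots> = prefix_weight b (restrict s {1..b}) * suffix_weight b (restrict s {b..T})"
    unfolding prefix_weight_def suffix_weight_def using assms
    by (intro arg_cong2[where f = "(*)"] arg_cong2[where f = "(*)"] prod.cong) auto
  finally show ?thesis .
qed

lemma window_mass_factor: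
  assumes "1 \<le> a" "a \<le> b" "b \<le> c" "c \<le> T"
  shows "window_mass a c s =
    (\<Sum>p\<in>{p\<in>{1..b} \<rightarrow>\<^sub>E UNIV. \<forall>t\<in>{a..b}. p t = s t}. prefix_weight b p)
    * (\<Sum>q\<in>{q\<in>{b..T} \<rightarrow>\<^sub>E UNIV. \<forall>t\<in>{b..c}. q t = s t}. suffix_weight b q)"
proof -
  have "window_mass a c s = (\<Sum>s'\<in>{s'\<in>paths T. \<forall>t\<in>{a..c}. s' t = s t}.
      prefix_weight b (restrict s' {1..b}) * suffix_weight b (restrict s' {b..T}))"
    unfolding window_mass_def using assms by (intro sum.cong refl joint_split) auto
  then show ?thesis using sum_agreeing_paths_split[OF assms] by simp
qed

lemma window_mass_markov:
  assumes "1 \<le> a" "a \<le> b" "b \<le> c" "c \<le> T"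
  shows "window_mass a c s * window_mass b b s = window_mass a b s * window_mass b c s"
  using assms window_mass_factor[of a b c s] window_mass_factor[of b b b s]
    window_mass_factor[of a b b s] window_mass_factor[of b b c s]
  by (simp add: mult_ac)

lemma post_markov:
  assumes "1 \<le> a" "a \<le> b" "b \<le> c" "c \<le> T"
  shows "post a c s * post b b s = post a b s * post b c s"
  using window_mass_markov[OF assms, of s] by (simp add: post_eq_window_mass)

lemma post_nonneg: "post a b s \<ge> 0"
  unfolding hmm_post_def using px_pos by (intro divide_nonneg_pos sum_nonneg) (auto simp: joint_nonneg)

lemma post_le_1: "post a b s \<le> 1"
  unfolding hmm_post_def hmm_px_def using px_pos
  by (subst divide_le_eq_1_pos) (auto simp: hmm_px_def joint_nonneg intro: sum_mono)

lemma post_antimono: "a \<le> a' \<Longrightarrow> b' \<le> b \<Longrightarrow> post a b s \<le> post a' b' s"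
  unfolding hmm_post_def using px_pos
  by (intro divide_right_mono sum_mono) (auto simp: joint_nonneg)

definition marginal_ratio :: "(nat \<Rightarrow> 's) \<Rightarrow> nat \<Rightarrow> real" where
  "marginal_ratio s t = post t (Suc t) s / (post t t s * post (Suc t) (Suc t) s)"

lemma post_chain_rule:
  assumes "1 \<le> a" "a \<le> b" "b \<le> T" "\<forall>t\<in>{a..b}. post t t s > 0"
  shows "post a b s = (\<Prod>t\<in>{a..b}. post t t s) * (\<Prod>t\<in>{a..<b}. marginal_ratio s t)"
  using assms(2-4)
proof (induction b rule: dec_induct)
  case base
  then show ?case by simp
next
  case (step n)
  have pos: "post n n s > 0" "post (Suc n) (Suc n) s > 0" using step.prems step.hyps by auto
  have IH: "post a n s = (\<Prod>t\<in>{a..n}. post t t s) * (\<Prod>t\<in>{a..<n}. marginal_ratio s t)"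
    using step by auto
  have "post a (Suc n) s * post n n s = post a n s * post n (Suc n) s"
    using post_markov[of a n "Suc n" s] assms(1) step.hyps step.prems by auto
  then have "post a (Suc n) s = post a n s * post n (Suc n) s / post n n s"
    using pos by (simp add: field_simps)
  also have "\<dots> = (\<Prod>t\<in>{a..Suc n}. post t t s) * (\<Prod>t\<in>{a..<Suc n}. marginal_ratio s t)"
    unfolding IH using step.hyps pos
    by (simp add: prod.atLeastLessThan_Suc marginal_ratio_def field_simps)
  finally show ?case .
qed

definition window_product :: "nat \<Rightarrow> (nat \<Rightarrow> 's) \<Rightarrow> real" where
  "window_product k s = (\<Prod>j\<in>{1 - int k .. int T - 1}.
      post (nat (max (j + 1) 1)) (nat (min (j + int k) (int T))) s)"

lemma Rbar_eq_window_product: "Rbar p0 P f T x k s = ereal (1 / real T) * - eln (window_product k s)"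
  by (simp add: Rbar_def window_product_def)

lemma window_product_marginals:
  assumes k: "k \<ge> 1" and pos: "\<forall>t\<in>{1..T}. post t t s > 0"
  shows "window_product k s = post 1 T s ^ (k - 1) * (\<Prod>t\<in>{1..T}. post t t s)"
proof -
  let ?M = "\<Prod>t\<in>{1..T}. post t t s" and ?R = "\<Prod>t\<in>{1..<T}. marginal_ratio s t"
  have "window_product k s = (\<Prod>j\<in>{1 - int k .. int T - 1}.
      (\<Prod>t\<in>{nat (max (j + 1) 1) .. nat (min (j + int k) (int T))}. post t t s)
      * (\<Prod>t\<in>{nat (max (j + 1) 1) ..< nat (min (j + int k) (int T))}. marginal_ratio s t))"
    unfolding window_product_def using k T_pos
    by (intro prod.cong refl post_chain_rule) (auto intro!: pos[rule_format])
  also have "\<dots> = (\<Prod>t\<in>{1..T}. post t t s ^ k) * (\<Prod>t\<in>{1..<T}. marginal_ratio s t ^ (k - 1))"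
    by (rule prod_over_windows[OF k])
  also have "\<dots> = (?M * ?R) ^ (k - 1) * ?M"
    using k by (cases k) (simp_all add: prod_power_distrib power_mult_distrib prod.distrib mult_ac)
  also have "?M * ?R = post 1 T s"
    using post_chain_rule[of 1 T s] pos T_pos by simp
  finally show ?thesis .
qed

lemma window_product_zero:
  assumes k: "k \<ge> 1" and t: "t \<in> {1..T}" and zero: "post t t s = 0"
  shows "window_product k s = 0"
proof -
  let ?j = "int t - 1"
  have "post (nat (max (?j + 1) 1)) (nat (min (?j + int k) (int T))) s \<le> post t t s"
    using t k by (intro post_antimono) auto
  then have "post (nat (max (?j + 1) 1)) (nat (min (?j + int k) (int T))) s = 0"
    using zero post_nonneg by (metis order_antisym)
  moreover have "?j \<in> {1 - int k .. int T - 1}" using k t by auto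
  ultimately show ?thesis unfolding window_product_def by (intro prod_zero) (auto intro: bexI[of _ ?j])
qed

lemma window_product_eq:
  assumes "k \<ge> 1"
  shows "window_product k s = post 1 T s ^ (k - 1) * window_product 1 s"
proof (cases "\<forall>t\<in>{1..T}. post t t s > 0")
  case True
  then show ?thesis using window_product_marginals[OF assms] window_product_marginals[of 1] by simp
next
  case False
  then obtain t where "t \<in> {1..T}" "post t t s = 0"
    by (metis post_nonneg order_antisym not_less)
  then show ?thesis using window_product_zero assms by simp
qed

lemma Rbar_decomposition:
  assumes "k \<ge> 1"
  shows "Rbar p0 P f T x k s = ereal (real k - 1) * Rbar_inf p0 P f T x s + Rbar p0 P f T x 1 s"
proof -
  have "window_product 1 s \<ge> 0"
    unfolding window_product_def by (intro prod_nonneg) (simp add: post_nonneg)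
  then have "- eln (window_product k s)
      = ereal (real (k - 1)) * - eln (post 1 T s) + - eln (window_product 1 s)"
    unfolding window_product_eq[OF assms] by (rule uminus_eln_power_mult[OF post_nonneg])
  moreover have "real (k - 1) = real k - 1" using assms by simp
  moreover have "ereal (1 / real T) * (a + b) = ereal (1 / real T) * a + ereal (1 / real T) * b" for a b
    using distrib_left_ereal_nn[of "1 / real T" a b] by (simp only: mult.commute) simp
  ultimately show ?thesis
    unfolding Rbar_eq_window_product Rbar_inf_def by (simp only: mult.left_commute)
qed

lemma Rbar_inf_nonneg: "Rbar_inf p0 P f T x s \<ge> 0"
  unfolding Rbar_inf_def by (intro ereal_0_le_mult uminus_eln_nonneg post_le_1) simp

lemma Rbar_nonneg: "Rbar p0 P f T x k s \<ge> 0"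
  unfolding Rbar_eq_window_product window_product_def
  by (intro ereal_0_le_mult uminus_eln_nonneg prod_le_1) (simp_all add: post_nonneg post_le_1)

lemma Rbar_inf_finite_iff: "Rbar_inf p0 P f T x s < \<infinity> \<longleftrightarrow> post 1 T s > 0"
  unfolding Rbar_inf_def using T_pos by (auto simp: eln_def)

lemma Rbar_finite_if_admissible:
  assumes "k \<ge> 1" and admissible: "post 1 T s > 0"
  shows "Rbar p0 P f T x k s < \<infinity>"
proof -
  have marginals: "\<forall>t\<in>{1..T}. post t t s > 0"
    using admissible post_antimono by (metis atLeastAtMost_iff less_le_trans)
  then have "window_product 1 s > 0"
    using window_product_marginals[of 1 s] by (auto intro!: prod_pos)
  then have "Rbar p0 P f T x 1 s < \<infinity>"
    unfolding Rbar_eq_window_product using T_pos by (simp add: eln_def)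
  moreover have "Rbar_inf p0 P f T x s < \<infinity>" using admissible Rbar_inf_finite_iff by simp
  ultimately show ?thesis
    using Rbar_decomposition[OF assms(1)] Rbar_inf_nonneg[of s] Rbar_nonneg[of 1 s]
    by (cases "Rbar_inf p0 P f T x s"; cases "Rbar p0 P f T x 1 s") auto
qed

lemma exists_admissible_path: "\<exists>s\<in>paths T. post 1 T s > 0"
proof -
  obtain s where s: "s \<in> paths T" "joint s > 0"
    using px_pos unfolding hmm_px_def by (metis sum_nonpos not_le)
  have "joint s \<le> window_mass 1 T s"
    unfolding window_mass_def using s(1) by (intro member_le_sum) (auto simp: joint_nonneg finite_paths)
  then have "post 1 T s > 0" using s(2) px_pos by (simp add: post_eq_window_mass)
  with s(1) show ?thesis by blast
qed

lemma minimiser_finite: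
  assumes "k \<ge> 2" and minimal: "\<forall>s\<in>paths T. Rbar p0 P f T x k v \<le> Rbar p0 P f T x k s"
  shows "Rbar_inf p0 P f T x v < \<infinity> \<and> Rbar p0 P f T x 1 v < \<infinity>"
proof -
  obtain s where s: "s \<in> paths T" "post 1 T s > 0" using exists_admissible_path by blast
  then have "Rbar p0 P f T x k s < \<infinity>" using Rbar_finite_if_admissible assms(1) by simp
  then have "Rbar p0 P f T x k v < \<infinity>" using minimal s(1) by (meson le_less_trans)
  then show ?thesis
    using Rbar_decomposition[of k v] Rbar_inf_nonneg[of v] Rbar_nonneg[of 1 v] assms(1)
    by (cases "Rbar_inf p0 P f T x v"; cases "Rbar p0 P f T x 1 v") auto
qed

lemma minimisers_tradeoff:
  assumes k: "k \<ge> 2"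
    and minimal: "\<forall>s\<in>paths T. Rbar p0 P f T x k v \<le> Rbar p0 P f T x k s"
    and minimal': "\<forall>s\<in>paths T. Rbar p0 P f T x (k - 1) v' \<le> Rbar p0 P f T x (k - 1) s"
    and paths: "v \<in> paths T" "v' \<in> paths T"
  shows "Rbar_inf p0 P f T x v \<le> Rbar_inf p0 P f T x v' \<and> Rbar p0 P f T x 1 v' \<le> Rbar p0 P f T x 1 v"
proof -
  obtain A B where A: "Rbar_inf p0 P f T x v = ereal A" and B: "Rbar p0 P f T x 1 v = ereal B"
    using minimiser_finite[OF k minimal] Rbar_inf_nonneg[of v] Rbar_nonneg[of 1 v]
    by (cases "Rbar_inf p0 P f T x v"; cases "Rbar p0 P f T x 1 v") auto
  have "ereal A \<le> Rbar_inf p0 P f T x v' \<and> Rbar p0 P f T x 1 v' \<le> ereal B"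
  proof (rule ereal_weighted_tradeoff[where c = "real k - 1" and d = "real k - 2"])
    show "0 \<le> real k - 2" "real k - 2 < real k - 1" using k by simp_all
    show "0 \<le> Rbar_inf p0 P f T x v'" "0 \<le> Rbar p0 P f T x 1 v'"
      by (rule Rbar_inf_nonneg, rule Rbar_nonneg)
    have "ereal (real k - 1) * Rbar_inf p0 P f T x v + Rbar p0 P f T x 1 v
        \<le> ereal (real k - 1) * Rbar_inf p0 P f T x v' + Rbar p0 P f T x 1 v'"
      using minimal paths k Rbar_decomposition[of k] by simp
    then show "ereal (real k - 1) * ereal A + ereal B
        \<le> ereal (real k - 1) * Rbar_inf p0 P f T x v' + Rbar p0 P f T x 1 v'"
      unfolding A B .
    have "real (k - 1) - 1 = real k - 2" using k by simp
    then have "ereal (real k - 2) * Rbar_inf p0 P f T x v' + Rbar p0 P f T x 1 v'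
        \<le> ereal (real k - 2) * Rbar_inf p0 P f T x v + Rbar p0 P f T x 1 v"
      using minimal' paths k Rbar_decomposition[of "k - 1"] by simp
    then show "ereal (real k - 2) * Rbar_inf p0 P f T x v' + Rbar p0 P f T x 1 v'
        \<le> ereal (real k - 2) * ereal A + ereal B"
      unfolding A B .
  qed
  with A B show ?thesis by simp
qed

end

theorem corollary6:
  fixes p0 :: "'s::finite \<Rightarrow> real" and P :: "'s \<Rightarrow> 's \<Rightarrow> real"
    and \<mu> :: "'x measure" and f :: "'s \<Rightarrow> 'x \<Rightarrow> real"
    and T :: nat and x :: "nat \<Rightarrow> 'x" and v :: "nat \<Rightarrow> nat \<Rightarrow> 's"
  assumes pi_nonneg: "\<forall>i. p0 i \<ge> 0" and pi_sum: "(\<Sum>i\<in>UNIV. p0 i) = 1"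
    and P_nonneg: "\<forall>i j. P i j \<ge> 0" and P_sum: "\<forall>i. (\<Sum>j\<in>UNIV. P i j) = 1"
    and f_meas: "\<forall>i. f i \<in> borel_measurable \<mu>"
    and f_nonneg: "\<forall>i y. f i y \<ge> 0"
    and f_dens: "\<forall>i. (\<integral>\<^sup>+ y. ennreal (f i y) \<partial>\<mu>) = 1"
    and T_pos: "T \<ge> 1"
    and x_in: "\<forall>t\<in>{1..T}. x t \<in> space \<mu>"
    and px_pos: "hmm_px p0 P f T x > 0"
    and v_min: "\<forall>k\<in>{1..T}. v k \<in> paths T \<and>
                   (\<forall>s\<in>paths T. Rbar p0 P f T x k (v k) \<le> Rbar p0 P f T x k s)"
  shows "(\<forall>k\<in>{1..T}. \<forall>s\<in>paths T.
            Rbar p0 P f T x k s = ereal (real k - 1) * Rbar_inf p0 P f T x s + Rbar p0 P f T x 1 s)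
       \<and> (\<forall>k\<in>{2..T}. hmm_post p0 P f T x 1 T (v k) > 0)
       \<and> (\<forall>k\<in>{2..T}. Rbar_inf p0 P f T x (v k) \<le> Rbar_inf p0 P f T x (v (k - 1)))
       \<and> (\<forall>k\<in>{2..T}. Rbar p0 P f T x 1 (v k) \<ge> Rbar p0 P f T x 1 (v (k - 1)))"
proof -
  interpret hmm_posterior p0 P f T x
    using pi_nonneg P_nonneg f_nonneg T_pos px_pos by unfold_locales auto
  have minimal: "v k \<in> paths T" "\<forall>s\<in>paths T. Rbar p0 P f T x k (v k) \<le> Rbar p0 P f T x k s"
    if "k \<in> {1..T}" for k
    using v_min that by blast+
  have admissible: "hmm_post p0 P f T x 1 T (v k) > 0" if "k \<in> {2..T}" for k
    using minimiser_finite[of k "v k"] minimal(2)[of k] that Rbar_inf_finite_iff by simp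
  have tradeoff: "Rbar_inf p0 P f T x (v k) \<le> Rbar_inf p0 P f T x (v (k - 1))
      \<and> Rbar p0 P f T x 1 (v (k - 1)) \<le> Rbar p0 P f T x 1 (v k)" if "k \<in> {2..T}" for k
  proof (rule minimisers_tradeoff)
    have "k \<in> {1..T}" "k - 1 \<in> {1..T}" using that by auto
    then show "\<forall>s\<in>paths T. Rbar p0 P f T x k (v k) \<le> Rbar p0 P f T x k s"
      "\<forall>s\<in>paths T. Rbar p0 P f T x (k - 1) (v (k - 1)) \<le> Rbar p0 P f T x (k - 1) s"
      "v k \<in> paths T" "v (k - 1) \<in> paths T"
      using minimal by blast+
  qed (use that in simp)
  have decomposition: "\<forall>k\<in>{1..T}. \<forall>s\<in>paths T.
      Rbar p0 P f T x k s = ereal (real k - 1) * Rbar_inf p0 P f T x s + Rbar p0 P f T x 1 s"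
    by (intro ballI Rbar_decomposition) simp
  show ?thesis
    using decomposition admissible tradeoff by blast
qed

end
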